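(* For every basis $\Gamma$, terms $M,N\in\Lambda_R$ and type $\sigma\in\mathbb{T}$: if $\Gamma\vdash M:\sigma$ and $M\to N$, then $\Gamma\vdash N:\sigma$.
   Context: \textbf{Terms.} $\Lambda_R\ni M,N ::= x\mid\lambda x.M\mid MN\mid M.l\mid R\mid M\oplus R$, with records $R ::= \langle l_i=M_i\mid i\in I\rangle$ ($I$ finite, labels pairwise distinct), $x$ ranging over variables and $l$ over labels; $\mathit{lbl}(\langle l_i=M_i\mid i\in I\rangle)=\{l_i\mid i\in I\}$. Reduction $\to$ is the least compatible relation (closed under all term constructors) containing $(\lambda x.M)N\to M[N/x]$ (capture-avoiding substitution); $\langle l_i=M_i\mid i\in I\rangle.l_j\to M_j$ if $j\in I$; $\langle l_i=M_i\mid i\in I\rangle\oplus\langle l_j=N_j\mid j\in J\rangle\to\langle l_i=M_i,\ l_j=N_j\mid i\in I\setminus J,\ j\in J\rangle$. \textbf{Types.} $\mathbb{T}\ni\sigma ::= a\mid\omega\mid\sigma_1\to\sigma_2\mid\sigma_1\cap\sigma_2\mid\rho$, record types $\mathbb{T}_R\ni\rho ::= \langle\rangle\mid\langle l:\sigma\rangle\mid\rho_1+\rho_2\mid\rho_1\cap\rho_2$. Subtyping $\le$ is the least preorder with: $\sigma\le\omega$; $\omega\le\omega\to\omega$; $\sigma\cap\tau\le\sigma$; $\sigma\cap\tau\le\tau$; $\sigma\le\tau_1,\sigma\le\tau_2\Rightarrow\sigma\le\tau_1\cap\tau_2$; $(\sigma\to\tau_1)\cap(\sigma\to\tau_2)\le\sigma\to\tau_1\cap\tau_2$;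 $\sigma_2\le\sigma_1,\tau_1\le\tau_2\Rightarrow\sigma_1\to\tau_1\le\sigma_2\to\tau_2$; $\langle l:\sigma\rangle\le\langle\rangle$; $\langle l:\sigma\rangle\cap\langle l:\tau\rangle\le\langle l:\sigma\cap\tau\rangle$; $\sigma\le\tau\Rightarrow\langle l:\sigma\rangle\le\langle l:\tau\rangle$; $\rho+\langle\rangle=\langle\rangle+\rho=\rho$; $(\rho_1+\rho_2)+\rho_3=\rho_1+(\rho_2+\rho_3)$; $(\rho_1\cap\rho_2)+\rho_3=(\rho_1+\rho_3)\cap(\rho_2+\rho_3)$; $\langle l:\sigma\rangle+(\langle l:\tau\rangle\cap\rho)=\langle l:\tau\rangle\cap\rho$; $\langle l:\sigma\rangle+(\langle l':\tau\rangle\cap\rho)=\langle l':\tau\rangle\cap(\langle l:\sigma\rangle+\rho)$ if $l\neq l'$; $\rho_1\le\rho_2\Rightarrow\rho_1+\rho\le\rho_2+\rho$; $\rho_1=\rho_2\Rightarrow\rho+\rho_1=\rho+\rho_2$; where $\sigma=\tau$ means $\sigma\le\tau$ and $\tau\le\sigma$. $\mathit{lbl}(\langle\rangle)=\emptyset$, $\mathit{lbl}(\langle l:\sigma\rangle)=\{l\}$, $\mathit{lbl}(\rho_1\cap\rho_2)=\mathit{lbl}(\rho_1+\rho_2)=\mathit{lbl}(\rho_1)\cup\mathit{lbl}(\rho_2)$. \textbf{Type assignment.} A basis $\Gamma$ is a finite set $\{x_1:\sigma_1,\ldots,x_n:\sigma_n\}$ with distinct variables. Rules: $\Gamma\vdash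 x:\sigma$ if $x:\sigma\in\Gamma$; from $\Gamma,x:\sigma\vdash M:\tau$ infer $\Gamma\vdash\lambda x.M:\sigma\to\tau$; from $\Gamma\vdash M:\sigma\to\tau$, $\Gamma\vdash N:\sigma$ infer $\Gamma\vdash MN:\tau$; from $\Gamma\vdash M:\sigma$, $\Gamma\vdash M:\tau$ infer $\Gamma\vdash M:\sigma\cap\tau$; $\Gamma\vdash M:\omega$; from $\Gamma\vdash M:\sigma$, $\sigma\le\tau$ infer $\Gamma\vdash M:\tau$; $\Gamma\vdash\langle l_i=M_i\mid i\in I\rangle:\langle\rangle$; from $\Gamma\vdash M_k:\sigma$, $k\in I$ infer $\Gamma\vdash\langle l_i=M_i\mid i\in I\rangle:\langle l_k:\sigma\rangle$; from $\Gamma\vdash M:\langle l:\sigma\rangle$ infer $\Gamma\vdash M.l:\sigma$; from $\Gamma\vdash M:\rho_1$, $\Gamma\vdash R:\rho_2$ and $\mathit{lbl}(R)=\mathit{lbl}(\rho_2)$ infer $\Gamma\vdash M\oplus R:\rho_1+\rho_2$. *)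

theory Defs
  imports Main
begin

text \<open>Labels and type atoms are natural numbers; variables are de Bruijn indices.
  A record is a partial map from labels to terms (well-formed terms require finite domain).\<close>

type_synonym lbl = nat

datatype trm =
    Var nat
  | Lam trm
  | App trm trm
  | Sel trm lbl
  | Rec "lbl \<Rightarrow> trm option"
  | Merge trm "lbl \<Rightarrow> trm option"   (* M \<oplus> R, with R a record *)

inductive wf_trm :: "trm \<Rightarrow> bool" where
  "wf_trm (Var x)"
| "wf_trm M \<Longrightarrow> wf_trm (Lam M)"
| "wf_trm M \<Longrightarrow> wf_trm N \<Longrightarrow> wf_trm (App M N)"
| "wf_trm M \<Longrightarrow> wf_trm (Sel M l)"
| "finite (dom f) \<Longrightarrow> (\<forall>M\<in>ran f. wf_trm M) \<Longrightarrow> wf_trm (Rec f)"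
| "wf_trm M \<Longrightarrow> finite (dom f) \<Longrightarrow> (\<forall>N\<in>ran f. wf_trm N) \<Longrightarrow> wf_trm (Merge M f)"

primrec lift :: "trm \<Rightarrow> nat \<Rightarrow> trm" where
  "lift (Var i) k = (if i < k then Var i else Var (Suc i))"
| "lift (Lam M) k = Lam (lift M (Suc k))"
| "lift (App M N) k = App (lift M k) (lift N k)"
| "lift (Sel M l) k = Sel (lift M k) l"
| "lift (Rec f) k = Rec (\<lambda>l. map_option (\<lambda>M. lift M k) (f l))"
| "lift (Merge M f) k = Merge (lift M k) (\<lambda>l. map_option (\<lambda>N. lift N k) (f l))"

primrec subst :: "trm \<Rightarrow> nat \<Rightarrow> trm \<Rightarrow> trm" where
  "subst (Var i) k N = (if k < i then Var (i - 1) else if i = k then N else Var i)"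
| "subst (Lam M) k N = Lam (subst M (Suc k) (lift N 0))"
| "subst (App M1 M2) k N = App (subst M1 k N) (subst M2 k N)"
| "subst (Sel M l) k N = Sel (subst M k N) l"
| "subst (Rec f) k N = Rec (\<lambda>l. map_option (\<lambda>M. subst M k N) (f l))"
| "subst (Merge M f) k N = Merge (subst M k N) (\<lambda>l. map_option (\<lambda>P. subst P k N) (f l))"

inductive red :: "trm \<Rightarrow> trm \<Rightarrow> bool" (infix \<open>\<rightarrow>\<^sub>R\<close> 50) where
  beta: "App (Lam M) N \<rightarrow>\<^sub>R subst M 0 N"
| sel: "f l = Some M \<Longrightarrow> Sel (Rec f) l \<rightarrow>\<^sub>R M"
| merge: "Merge (Rec f) g \<rightarrow>\<^sub>R Rec (f ++ g)"
| lam: "M \<rightarrow>\<^sub>R M' \<Longrightarrow> Lam M \<rightarrow>\<^sub>R Lam M'"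
| appL: "M \<rightarrow>\<^sub>R M' \<Longrightarrow> App M N \<rightarrow>\<^sub>R App M' N"
| appR: "N \<rightarrow>\<^sub>R N' \<Longrightarrow> App M N \<rightarrow>\<^sub>R App M N'"
| selC: "M \<rightarrow>\<^sub>R M' \<Longrightarrow> Sel M l \<rightarrow>\<^sub>R Sel M' l"
| recC: "f l = Some M \<Longrightarrow> M \<rightarrow>\<^sub>R M' \<Longrightarrow> Rec f \<rightarrow>\<^sub>R Rec (f(l \<mapsto> M'))"
| mergeL: "M \<rightarrow>\<^sub>R M' \<Longrightarrow> Merge M g \<rightarrow>\<^sub>R Merge M' g"
| mergeR: "g l = Some N \<Longrightarrow> N \<rightarrow>\<^sub>R N' \<Longrightarrow> Merge M g \<rightarrow>\<^sub>R Merge M (g(l \<mapsto> N'))"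

datatype ty =
    TAtom nat
  | Omega
  | Arr ty ty
  | Inter ty ty
  | REmpty
  | RField lbl ty
  | RPlus ty ty

text \<open>\<open>wf_ty\<close>: membership in \<open>\<T>\<close>; \<open>rty\<close>: membership in \<open>\<T>\<^sub>R\<close>.\<close>
inductive wf_ty :: "ty \<Rightarrow> bool" and rty :: "ty \<Rightarrow> bool" where
  "wf_ty (TAtom a)"
| "wf_ty Omega"
| "wf_ty s \<Longrightarrow> wf_ty t \<Longrightarrow> wf_ty (Arr s t)"
| "wf_ty s \<Longrightarrow> wf_ty t \<Longrightarrow> wf_ty (Inter s t)"
| "rty r \<Longrightarrow> wf_ty r"
| "rty REmpty"
| "wf_ty s \<Longrightarrow> rty (RField l s)"
| "rty r1 \<Longrightarrow> rty r2 \<Longrightarrow> rty (RPlus r1 r2)"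
| "rty r1 \<Longrightarrow> rty r2 \<Longrightarrow> rty (Inter r1 r2)"

primrec tlbl :: "ty \<Rightarrow> lbl set" where
  "tlbl (TAtom a) = {}"
| "tlbl Omega = {}"
| "tlbl (Arr s t) = {}"
| "tlbl (Inter r1 r2) = tlbl r1 \<union> tlbl r2"
| "tlbl REmpty = {}"
| "tlbl (RField l s) = {l}"
| "tlbl (RPlus r1 r2) = tlbl r1 \<union> tlbl r2"

inductive sub :: "ty \<Rightarrow> ty \<Rightarrow> bool" (infix \<open>\<le>\<^sub>T\<close> 50) where
  refl: "wf_ty s \<Longrightarrow> s \<le>\<^sub>T s"
| trans: "s \<le>\<^sub>T t \<Longrightarrow> t \<le>\<^sub>T u \<Longrightarrow> s \<le>\<^sub>T u"
| top: "wf_ty s \<Longrightarrow> s \<le>\<^sub>T Omega"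
| omega_arr: "Omega \<le>\<^sub>T Arr Omega Omega"
| inter1: "wf_ty s \<Longrightarrow> wf_ty t \<Longrightarrow> Inter s t \<le>\<^sub>T s"
| inter2: "wf_ty s \<Longrightarrow> wf_ty t \<Longrightarrow> Inter s t \<le>\<^sub>T t"
| interI: "s \<le>\<^sub>T t1 \<Longrightarrow> s \<le>\<^sub>T t2 \<Longrightarrow> s \<le>\<^sub>T Inter t1 t2"
| arr_inter: "wf_ty s \<Longrightarrow> wf_ty t1 \<Longrightarrow> wf_ty t2 \<Longrightarrow>
     Inter (Arr s t1) (Arr s t2) \<le>\<^sub>T Arr s (Inter t1 t2)"
| arr: "s2 \<le>\<^sub>T s1 \<Longrightarrow> t1 \<le>\<^sub>T t2 \<Longrightarrow> Arr s1 t1 \<le>\<^sub>T Arr s2 t2"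
| field_empty: "wf_ty s \<Longrightarrow> RField l s \<le>\<^sub>T REmpty"
| field_inter: "wf_ty s \<Longrightarrow> wf_ty t \<Longrightarrow> Inter (RField l s) (RField l t) \<le>\<^sub>T RField l (Inter s t)"
| field: "s \<le>\<^sub>T t \<Longrightarrow> RField l s \<le>\<^sub>T RField l t"
| plus_empty_r1: "rty r \<Longrightarrow> RPlus r REmpty \<le>\<^sub>T r"
| plus_empty_r2: "rty r \<Longrightarrow> r \<le>\<^sub>T RPlus r REmpty"
| plus_empty_l1: "rty r \<Longrightarrow> RPlus REmpty r \<le>\<^sub>T r"
| plus_empty_l2: "rty r \<Longrightarrow> r \<le>\<^sub>T RPlus REmpty r"
| plus_assoc1: "rty r1 \<Longrightarrow> rty r2 \<Longrightarrow> rty r3 \<Longrightarrow>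
     RPlus (RPlus r1 r2) r3 \<le>\<^sub>T RPlus r1 (RPlus r2 r3)"
| plus_assoc2: "rty r1 \<Longrightarrow> rty r2 \<Longrightarrow> rty r3 \<Longrightarrow>
     RPlus r1 (RPlus r2 r3) \<le>\<^sub>T RPlus (RPlus r1 r2) r3"
| plus_distr1: "rty r1 \<Longrightarrow> rty r2 \<Longrightarrow> rty r3 \<Longrightarrow>
     RPlus (Inter r1 r2) r3 \<le>\<^sub>T Inter (RPlus r1 r3) (RPlus r2 r3)"
| plus_distr2: "rty r1 \<Longrightarrow> rty r2 \<Longrightarrow> rty r3 \<Longrightarrow>
     Inter (RPlus r1 r3) (RPlus r2 r3) \<le>\<^sub>T RPlus (Inter r1 r2) r3"
| plus_same1: "wf_ty s \<Longrightarrow> wf_ty t \<Longrightarrow> rty r \<Longrightarrow>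
     RPlus (RField l s) (Inter (RField l t) r) \<le>\<^sub>T Inter (RField l t) r"
| plus_same2: "wf_ty s \<Longrightarrow> wf_ty t \<Longrightarrow> rty r \<Longrightarrow>
     Inter (RField l t) r \<le>\<^sub>T RPlus (RField l s) (Inter (RField l t) r)"
| plus_diff1: "l \<noteq> l' \<Longrightarrow> wf_ty s \<Longrightarrow> wf_ty t \<Longrightarrow> rty r \<Longrightarrow>
     RPlus (RField l s) (Inter (RField l' t) r) \<le>\<^sub>T Inter (RField l' t) (RPlus (RField l s) r)"
| plus_diff2: "l \<noteq> l' \<Longrightarrow> wf_ty s \<Longrightarrow> wf_ty t \<Longrightarrow> rty r \<Longrightarrow>
     Inter (RField l' t) (RPlus (RField l s) r) \<le>\<^sub>T RPlus (RField l s) (Inter (RField l' t) r)"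
| plus_mono_l: "r1 \<le>\<^sub>T r2 \<Longrightarrow> rty r1 \<Longrightarrow> rty r2 \<Longrightarrow> rty r \<Longrightarrow> RPlus r1 r \<le>\<^sub>T RPlus r2 r"
| plus_cong_r: "r1 \<le>\<^sub>T r2 \<Longrightarrow> r2 \<le>\<^sub>T r1 \<Longrightarrow> rty r1 \<Longrightarrow> rty r2 \<Longrightarrow> rty r \<Longrightarrow>
     RPlus r r1 \<le>\<^sub>T RPlus r r2"

text \<open>A basis is a finite partial map from (de Bruijn) variables to types.
  \<open>ext_basis \<Gamma> s\<close> is \<open>\<Gamma>, x:s\<close> for the newly bound variable (index 0).\<close>
definition ext_basis :: "(nat \<Rightarrow> ty option) \<Rightarrow> ty \<Rightarrow> nat \<Rightarrow> ty option" where
  "ext_basis \<Gamma> s = (\<lambda>n. case n of 0 \<Rightarrow> Some s | Suc k \<Rightarrow> \<Gamma> k)"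

definition basis :: "(nat \<Rightarrow> ty option) \<Rightarrow> bool" where
  "basis \<Gamma> \<longleftrightarrow> finite (dom \<Gamma>) \<and> (\<forall>s\<in>ran \<Gamma>. wf_ty s)"

inductive has_type :: "(nat \<Rightarrow> ty option) \<Rightarrow> trm \<Rightarrow> ty \<Rightarrow> bool" (\<open>_ \<turnstile> _ : _\<close> [50,50,50] 50) where
  var: "\<Gamma> x = Some s \<Longrightarrow> \<Gamma> \<turnstile> Var x : s"
| lam: "wf_ty s \<Longrightarrow> ext_basis \<Gamma> s \<turnstile> M : t \<Longrightarrow> \<Gamma> \<turnstile> Lam M : Arr s t"
| app: "\<Gamma> \<turnstile> M : Arr s t \<Longrightarrow> \<Gamma> \<turnstile> N : s \<Longrightarrow> \<Gamma> \<turnstile> App M N : t"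
| inter: "\<Gamma> \<turnstile> M : s \<Longrightarrow> \<Gamma> \<turnstile> M : t \<Longrightarrow> \<Gamma> \<turnstile> M : Inter s t"
| omega: "\<Gamma> \<turnstile> M : Omega"
| subsump: "\<Gamma> \<turnstile> M : s \<Longrightarrow> s \<le>\<^sub>T t \<Longrightarrow> \<Gamma> \<turnstile> M : t"
| rec_empty: "\<Gamma> \<turnstile> Rec f : REmpty"
| rec_field: "f k = Some Mk \<Longrightarrow> \<Gamma> \<turnstile> Mk : s \<Longrightarrow> \<Gamma> \<turnstile> Rec f : RField k s"
| sel: "\<Gamma> \<turnstile> M : RField l s \<Longrightarrow> \<Gamma> \<turnstile> Sel M l : s"
| merge: "\<Gamma> \<turnstile> M : r1 \<Longrightarrow> rty r1 \<Longrightarrow> \<Gamma> \<turnstile> Rec g : r2 \<Longrightarrow> rty r2 \<Longrightarrow> dom g = tlbl r2 \<Longrightarrow>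
     \<Gamma> \<turnstile> Merge M g : RPlus r1 r2"

end

theory Submission
  imports Defs
begin

text \<open>The only real work is at
  the redexes, where inversion lemmas must see through subsumption. They are obtained by
  interpreting types as predicates stable under subtyping: for \<open>Lam M\<close>, every arrow
  conjunct \<open>\<sigma> \<rightarrow> \<tau>\<close> of its type gives \<open>\<Gamma>, x:\<sigma> \<turnstile> M : \<tau>\<close>, and \<beta> then follows from the
  substitution lemma; for a record, every field of its type not overridden by a right summand
  is a typed field of the record. For a merge, every record type is equivalent to the
  intersection of the fields it guarantees, and \<open>f ++ g\<close> can be given that intersection
  field by field.\<close>

section \<open>Subtyping\<close>

inductive_cases rty_InterE: "rty (Inter a b)"
inductive_cases rty_RFieldE: "rty (RField l s)"
inductive_cases rty_RPlusE: "rty (RPlus a b)"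
inductive_cases rty_OmegaE: "rty Omega"
inductive_cases rty_ArrE: "rty (Arr a b)"
inductive_cases rty_TAtomE: "rty (TAtom a)"

lemma sub_wf_ty: "s \<le>\<^sub>T t \<Longrightarrow> wf_ty s \<and> wf_ty t"
  by (induction rule: sub.induct) (auto intro: wf_ty_rty.intros)

lemma sub_tlbl: "s \<le>\<^sub>T t \<Longrightarrow> tlbl t \<subseteq> tlbl s"
  by (induction rule: sub.induct) auto

lemma Inter_sub_mono: "a \<le>\<^sub>T a' \<Longrightarrow> b \<le>\<^sub>T b' \<Longrightarrow> Inter a b \<le>\<^sub>T Inter a' b'"
  by (meson sub.interI sub.inter1 sub.inter2 sub.trans sub_wf_ty)

definition ty_eq :: "ty \<Rightarrow> ty \<Rightarrow> bool" (infix \<open>=\<^sub>T\<close> 50) where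
  "s =\<^sub>T t \<longleftrightarrow> s \<le>\<^sub>T t \<and> t \<le>\<^sub>T s"

lemma ty_eq_refl: "wf_ty s \<Longrightarrow> s =\<^sub>T s"
  by (simp add: ty_eq_def sub.refl)

lemma ty_eq_trans [trans]: "s =\<^sub>T t \<Longrightarrow> t =\<^sub>T u \<Longrightarrow> s =\<^sub>T u"
  unfolding ty_eq_def by (meson sub.trans)

lemma ty_eq_Inter: "a =\<^sub>T a' \<Longrightarrow> b =\<^sub>T b' \<Longrightarrow> Inter a b =\<^sub>T Inter a' b'"
  by (simp add: ty_eq_def Inter_sub_mono)

section \<open>Weakening and substitution\<close>

definition lift_index :: "nat \<Rightarrow> nat \<Rightarrow> nat" where
  "lift_index k i = (if i < k then i else Suc i)"

lemma ext_basis_lift_index_0: "ext_basis \<Gamma> s \<circ> lift_index 0 = \<Gamma>"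
  by (simp add: fun_eq_iff ext_basis_def lift_index_def)

lemma ext_basis_lift_index_Suc:
  "ext_basis \<Gamma> s \<circ> lift_index (Suc k) = ext_basis (\<Gamma> \<circ> lift_index k) s"
  by (simp add: fun_eq_iff ext_basis_def lift_index_def split: nat.split)

lemma dom_map_option_comp [simp]: "dom (\<lambda>l. map_option h (g l)) = dom g"
  by (auto simp: dom_def)

lemma has_type_lift:
  "\<Gamma> \<turnstile> M : t \<Longrightarrow> \<Gamma>' \<circ> lift_index k = \<Gamma> \<Longrightarrow> \<Gamma>' \<turnstile> lift M k : t"
proof (induction arbitrary: \<Gamma>' k rule: has_type.induct)
  case (var \<Gamma> x s)
  then show ?case by (auto simp: lift_index_def intro!: has_type.var split: if_splits)
next
  case (lam s \<Gamma> M t)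
  have "ext_basis \<Gamma>' s \<circ> lift_index (Suc k) = ext_basis \<Gamma> s"
    unfolding ext_basis_lift_index_Suc lam.prems ..
  then show ?case unfolding lift.simps by (intro has_type.lam lam.hyps(1) lam.IH)
next
  case (app \<Gamma> M s t N)
  show ?case
    using has_type.app[OF app.IH(1)[OF app.prems] app.IH(2)[OF app.prems]] by simp
next
  case (merge \<Gamma> M r1 g r2)
  show ?case
    unfolding lift.simps
    by (rule has_type.merge[OF merge.IH(1)[OF merge.prems] merge.hyps(2)
          merge.IH(2)[OF merge.prems, unfolded lift.simps] merge.hyps(4)])
      (simp add: merge.hyps(5))
qed (auto intro: has_type.intros)

lemma has_type_subst:
  "\<Gamma> \<turnstile> M : t \<Longrightarrow> \<Gamma> k = Some u \<Longrightarrow> \<Gamma> \<circ> lift_index k \<turnstile> N : u \<Longrightarrow>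
    \<Gamma> \<circ> lift_index k \<turnstile> subst M k N : t"
proof (induction arbitrary: k N u rule: has_type.induct)
  case (var \<Gamma> x s)
  then show ?case by (auto simp: lift_index_def intro!: has_type.var)
next
  case (lam s \<Gamma> M t)
  have "ext_basis \<Gamma> s (Suc k) = Some u"
    using lam.prems(1) by (simp add: ext_basis_def)
  moreover have "ext_basis \<Gamma> s \<circ> lift_index (Suc k) \<turnstile> lift N 0 : u"
    unfolding ext_basis_lift_index_Suc
    using lam.prems(2) ext_basis_lift_index_0 by (rule has_type_lift)
  ultimately have "ext_basis \<Gamma> s \<circ> lift_index (Suc k) \<turnstile> subst M (Suc k) (lift N 0) : t"
    by (rule lam.IH)
  then show ?case
    unfolding subst.simps ext_basis_lift_index_Suc by (rule has_type.lam[OF lam.hyps(1)])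
next
  case (app \<Gamma> M s t N)
  show ?case
    using has_type.app[OF app.IH(1)[OF app.prems] app.IH(2)[OF app.prems]] by simp
next
  case (merge \<Gamma> M r1 g r2)
  show ?case
    unfolding subst.simps
    by (rule has_type.merge[OF merge.IH(1)[OF merge.prems] merge.hyps(2)
          merge.IH(2)[OF merge.prems, unfolded subst.simps] merge.hyps(4)])
      (simp add: merge.hyps(5))
qed (auto intro: has_type.intros)

lemma has_type_beta:
  "ext_basis \<Gamma> s \<turnstile> M : t \<Longrightarrow> \<Gamma> \<turnstile> N : s \<Longrightarrow> \<Gamma> \<turnstile> subst M 0 N : t"
  using has_type_subst[of "ext_basis \<Gamma> s" M t 0 s N]
  by (simp add: ext_basis_lift_index_0) (simp add: ext_basis_def)

lemma has_type_change_basis: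
  "\<Gamma> \<turnstile> M : t \<Longrightarrow> (\<And>x s. \<Gamma> x = Some s \<Longrightarrow> \<Gamma>' \<turnstile> Var x : s) \<Longrightarrow> \<Gamma>' \<turnstile> M : t"
proof (induction arbitrary: \<Gamma>' rule: has_type.induct)
  case (lam s \<Gamma> M t)
  have "ext_basis \<Gamma>' s \<turnstile> Var x : s'" if "ext_basis \<Gamma> s x = Some s'" for x s'
  proof (cases x)
    case (Suc k)
    then show ?thesis
      using has_type_lift[OF lam.prems, OF _ ext_basis_lift_index_0] that
      by (simp add: ext_basis_def lift_index_def)
  qed (use that in \<open>auto simp: ext_basis_def intro: has_type.var\<close>)
  with lam show ?case by (auto intro: has_type.lam)
qed (blast intro: has_type.intros)+

section \<open>Inversion for abstractions\<close>

fun body_typing :: "(nat \<Rightarrow> ty option) \<Rightarrow> trm \<Rightarrow> ty \<Rightarrow> bool" where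
  "body_typing \<Gamma> M (Arr s t) \<longleftrightarrow> ext_basis \<Gamma> s \<turnstile> M : t"
| "body_typing \<Gamma> M (Inter s t) \<longleftrightarrow> body_typing \<Gamma> M s \<and> body_typing \<Gamma> M t"
| "body_typing \<Gamma> M Omega \<longleftrightarrow> True"
| "body_typing \<Gamma> M _ \<longleftrightarrow> False"

lemma rty_not_body_typing: "rty r \<Longrightarrow> \<not> body_typing \<Gamma> M r"
  by (induction r) (auto elim: rty_InterE rty_OmegaE rty_ArrE)

lemma has_type_ext_basis_sub:
  assumes "ext_basis \<Gamma> s \<turnstile> M : t" and "s' \<le>\<^sub>T s"
  shows "ext_basis \<Gamma> s' \<turnstile> M : t"
  using assms(1)
proof (rule has_type_change_basis)
  fix x u
  assume "ext_basis \<Gamma> s x = Some u"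
  then show "ext_basis \<Gamma> s' \<turnstile> Var x : u"
    using assms(2) has_type.subsump[OF has_type.var, of "ext_basis \<Gamma> s'" 0 s']
    by (cases x) (auto simp: ext_basis_def intro: has_type.var)
qed

lemma body_typing_sub: "s \<le>\<^sub>T t \<Longrightarrow> body_typing \<Gamma> M s \<Longrightarrow> body_typing \<Gamma> M t"
  by (induction rule: sub.induct)
    (auto intro: has_type.intros has_type_ext_basis_sub simp: rty_not_body_typing)

lemma has_type_Lam_body_typing: "\<Gamma> \<turnstile> L : \<tau> \<Longrightarrow> L = Lam M \<Longrightarrow> body_typing \<Gamma> M \<tau>"
  by (induction rule: has_type.induct) (auto intro: body_typing_sub)

lemma has_type_Lam_Arr_inv: "\<Gamma> \<turnstile> Lam M : Arr s t \<Longrightarrow> ext_basis \<Gamma> s \<turnstile> M : t"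
  using has_type_Lam_body_typing by fastforce

section \<open>Inversion for records\<close>

text \<open>\<open>fields_typed \<Gamma> L h \<tau>\<close>: every field \<open>l : \<sigma>\<close> of \<open>\<tau>\<close> with \<open>l \<notin> L\<close> is a field of \<open>h\<close>
  typed \<open>\<sigma>\<close>. In \<open>\<rho>\<^sub>1 + \<rho>\<^sub>2\<close> the labels of \<open>\<rho>\<^sub>2\<close> override those of \<open>\<rho>\<^sub>1\<close>, so they are added to \<open>L\<close>
  when descending into \<open>\<rho>\<^sub>1\<close>.\<close>

primrec fields_typed :: "(nat \<Rightarrow> ty option) \<Rightarrow> lbl set \<Rightarrow> (lbl \<Rightarrow> trm option) \<Rightarrow> ty \<Rightarrow> bool" where
  "fields_typed \<Gamma> L h (TAtom a) \<longleftrightarrow> True"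
| "fields_typed \<Gamma> L h Omega \<longleftrightarrow> True"
| "fields_typed \<Gamma> L h (Arr s t) \<longleftrightarrow> True"
| "fields_typed \<Gamma> L h (Inter s t) \<longleftrightarrow> fields_typed \<Gamma> L h s \<and> fields_typed \<Gamma> L h t"
| "fields_typed \<Gamma> L h REmpty \<longleftrightarrow> True"
| "fields_typed \<Gamma> L h (RField l s) \<longleftrightarrow> l \<in> L \<or> (\<exists>M. h l = Some M \<and> \<Gamma> \<turnstile> M : s)"
| "fields_typed \<Gamma> L h (RPlus r1 r2) \<longleftrightarrow>
     fields_typed \<Gamma> L h r2 \<and> fields_typed \<Gamma> (L \<union> tlbl r2) h r1"

lemma fields_typed_mono: "fields_typed \<Gamma> L h t \<Longrightarrow> L \<subseteq> L' \<Longrightarrow> fields_typed \<Gamma> L' h t"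
proof (induction t arbitrary: L L')
  case (RPlus r1 r2)
  then show ?case by simp (meson Un_mono order_refl)
qed auto

lemma fields_typed_sub: "s \<le>\<^sub>T t \<Longrightarrow> fields_typed \<Gamma> L h s \<Longrightarrow> fields_typed \<Gamma> L h t"
proof (induction arbitrary: L rule: sub.induct)
  case (plus_cong_r r1 r2 r)
  then have "tlbl r1 = tlbl r2" using sub_tlbl by blast
  with plus_cong_r show ?case by simp
qed (auto intro: has_type.inter has_type.subsump elim: fields_typed_mono)

lemma has_type_Rec_fields_typed: "\<Gamma> \<turnstile> R : \<tau> \<Longrightarrow> R = Rec h \<Longrightarrow> fields_typed \<Gamma> {} h \<tau>"
  by (induction rule: has_type.induct) (auto intro: fields_typed_sub)

section \<open>Normal forms of record types\<close>

definition override :: "(lbl \<times> ty) list \<Rightarrow> (lbl \<times> ty) list \<Rightarrow> (lbl \<times> ty) list" where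
  "override xs ys = filter (\<lambda>p. fst p \<notin> fst ` set ys) xs @ ys"

fun rfields :: "ty \<Rightarrow> (lbl \<times> ty) list" where
  "rfields (RField l s) = [(l, s)]"
| "rfields (Inter r1 r2) = rfields r1 @ rfields r2"
| "rfields (RPlus r1 r2) = override (rfields r1) (rfields r2)"
| "rfields _ = []"

fun field_inter :: "(lbl \<times> ty) list \<Rightarrow> ty" where
  "field_inter [] = REmpty"
| "field_inter ((l, s) # xs) = Inter (RField l s) (field_inter xs)"

definition wf_fields :: "(lbl \<times> ty) list \<Rightarrow> bool" where
  "wf_fields xs \<longleftrightarrow> (\<forall>p\<in>set xs. wf_ty (snd p))"

lemma wf_fields_simps [simp]:
  "wf_fields []"
  "wf_fields ((l, s) # xs) \<longleftrightarrow> wf_ty s \<and> wf_fields xs"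
  "wf_fields (xs @ ys) \<longleftrightarrow> wf_fields xs \<and> wf_fields ys"
  by (auto simp: wf_fields_def)

lemma wf_fields_subset: "wf_fields xs \<Longrightarrow> set ys \<subseteq> set xs \<Longrightarrow> wf_fields ys"
  by (auto simp: wf_fields_def)

lemma wf_fields_override: "wf_fields xs \<Longrightarrow> wf_fields ys \<Longrightarrow> wf_fields (override xs ys)"
  by (auto simp: wf_fields_def override_def)

lemma wf_fields_rfields: "rty r \<Longrightarrow> wf_fields (rfields r)"
  by (induction r) (auto elim!: rty_RFieldE rty_InterE rty_RPlusE intro: wf_fields_override)

lemma tlbl_eq_rfields: "tlbl r = fst ` set (rfields r)"
  by (induction r) (auto simp: override_def)

lemma rty_field_inter: "wf_fields xs \<Longrightarrow> rty (field_inter xs)"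
  by (induction xs rule: field_inter.induct) (auto intro: wf_ty_rty.intros)

lemma wf_ty_field_inter: "wf_fields xs \<Longrightarrow> wf_ty (field_inter xs)"
  by (simp add: rty_field_inter wf_ty_rty.intros)

lemma field_inter_sub_REmpty: "wf_fields xs \<Longrightarrow> field_inter xs \<le>\<^sub>T REmpty"
proof (induction xs rule: field_inter.induct)
  case 1
  then show ?case by (simp add: sub.refl wf_ty_rty.intros)
next
  case (2 l s xs)
  then have "wf_ty s" "wf_ty (RField l s)" "wf_ty (field_inter xs)"
    by (auto intro: wf_ty_field_inter wf_ty_rty.intros)
  then show ?case by (auto intro: sub.trans[OF sub.inter1] sub.field_empty)
qed

lemma field_inter_sub_RField:
  "wf_fields xs \<Longrightarrow> (l, s) \<in> set xs \<Longrightarrow> field_inter xs \<le>\<^sub>T RField l s"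
proof (induction xs rule: field_inter.induct)
  case (2 l' s' xs)
  then have "wf_ty (RField l' s')" "wf_ty (field_inter xs)"
    by (auto intro: wf_ty_rty.intros wf_ty_field_inter)
  with 2 show ?case by (auto intro: sub.inter1 sub.trans[OF sub.inter2])
qed simp

lemma sub_field_inter:
  "t \<le>\<^sub>T REmpty \<Longrightarrow> (\<And>l s. (l, s) \<in> set ys \<Longrightarrow> t \<le>\<^sub>T RField l s) \<Longrightarrow> t \<le>\<^sub>T field_inter ys"
  by (induction ys rule: field_inter.induct) (auto intro: sub.interI)

lemma field_inter_sub_subset:
  "wf_fields xs \<Longrightarrow> set ys \<subseteq> set xs \<Longrightarrow> field_inter xs \<le>\<^sub>T field_inter ys"
  by (rule sub_field_inter) (auto intro: field_inter_sub_REmpty field_inter_sub_RField)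

lemma field_inter_set_eq:
  "wf_fields xs \<Longrightarrow> set xs = set ys \<Longrightarrow> field_inter xs =\<^sub>T field_inter ys"
  unfolding ty_eq_def by (metis wf_fields_subset field_inter_sub_subset order_refl)

lemma Inter_field_inter:
  assumes "wf_fields xs" "wf_fields ys"
  shows "Inter (field_inter xs) (field_inter ys) =\<^sub>T field_inter (xs @ ys)"
proof -
  have wf: "wf_ty (field_inter xs)" "wf_ty (field_inter ys)"
    using assms by (auto intro: wf_ty_field_inter)
  have "Inter (field_inter xs) (field_inter ys) \<le>\<^sub>T field_inter (xs @ ys)"
  proof (rule sub_field_inter)
    show "Inter (field_inter xs) (field_inter ys) \<le>\<^sub>T REmpty"
      using wf assms by (meson field_inter_sub_REmpty sub.inter1 sub.trans)
    show "Inter (field_inter xs) (field_inter ys) \<le>\<^sub>T RField l s" if "(l, s) \<in> set (xs @ ys)" for l s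
      using wf assms that
      by (auto intro: sub.trans[OF sub.inter1] sub.trans[OF sub.inter2] field_inter_sub_RField)
  qed
  moreover have "field_inter (xs @ ys) \<le>\<^sub>T Inter (field_inter xs) (field_inter ys)"
    using assms by (auto intro!: sub.interI field_inter_sub_subset)
  ultimately show ?thesis unfolding ty_eq_def by simp
qed

lemma RPlus_RField_field_inter:
  assumes "wf_ty s" "wf_fields ys"
  shows "RPlus (RField l s) (field_inter ys) =\<^sub>T field_inter (override [(l, s)] ys)"
  using assms(2)
proof (induction ys rule: field_inter.induct)
  case 1
  have "rty (RField l s)" "wf_ty (RField l s)"
    using assms(1) by (auto intro: wf_ty_rty.intros)
  then show ?case
    using assms(1) unfolding ty_eq_def override_def
    by (auto intro!: sub.trans[OF sub.plus_empty_r1] sub.trans[OF _ sub.plus_empty_r2]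
        sub.interI sub.refl sub.field_empty sub.inter1 wf_ty_rty.intros)
next
  case (2 l' t ys)
  then have wf: "wf_ty t" "rty (field_inter ys)" "wf_fields ys"
    by (auto intro: rty_field_inter)
  show ?case
  proof (cases "l = l'")
    case True
    then show ?thesis
      using wf assms(1) unfolding ty_eq_def override_def
      by (auto intro: sub.plus_same1 sub.plus_same2)
  next
    case False
    have "RPlus (RField l s) (Inter (RField l' t) (field_inter ys))
        =\<^sub>T Inter (RField l' t) (RPlus (RField l s) (field_inter ys))"
      unfolding ty_eq_def using wf assms(1) False by (auto intro: sub.plus_diff1 sub.plus_diff2)
    also have "\<dots> =\<^sub>T Inter (RField l' t) (field_inter (override [(l, s)] ys))"
      using 2 wf by (intro ty_eq_Inter ty_eq_refl) (auto intro: wf_ty_rty.intros)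
    also have "\<dots> =\<^sub>T field_inter (override [(l, s)] ((l', t) # ys))"
      using wf assms(1) False
      by (intro field_inter_set_eq[of "(l', t) # _", simplified])
        (auto simp: override_def intro: wf_fields_override)
    finally show ?thesis by simp
  qed
qed

lemma RPlus_field_inter:
  assumes "wf_fields xs" "wf_fields ys"
  shows "RPlus (field_inter xs) (field_inter ys) =\<^sub>T field_inter (override xs ys)"
  using assms(1)
proof (induction xs rule: field_inter.induct)
  case 1
  then show ?case
    using assms(2) rty_field_inter unfolding ty_eq_def override_def
    by (auto intro: sub.plus_empty_l1 sub.plus_empty_l2)
next
  case (2 l s xs)
  then have wf: "wf_ty s" "rty (RField l s)" "rty (field_inter xs)" "rty (field_inter ys)" "wf_fields xs"
    using assms(2) by (auto intro: wf_ty_rty.intros rty_field_inter)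
  have "RPlus (Inter (RField l s) (field_inter xs)) (field_inter ys)
      =\<^sub>T Inter (RPlus (RField l s) (field_inter ys)) (RPlus (field_inter xs) (field_inter ys))"
    unfolding ty_eq_def using wf by (auto intro: sub.plus_distr1 sub.plus_distr2)
  also have "\<dots> =\<^sub>T Inter (field_inter (override [(l, s)] ys)) (field_inter (override xs ys))"
    using 2 wf assms(2) by (intro ty_eq_Inter RPlus_RField_field_inter) auto
  also have "\<dots> =\<^sub>T field_inter (override [(l, s)] ys @ override xs ys)"
    using wf assms(2) by (intro Inter_field_inter wf_fields_override) auto
  also have "\<dots> =\<^sub>T field_inter (override ((l, s) # xs) ys)"
    using wf assms(2) by (intro field_inter_set_eq) (auto simp: override_def wf_fields_def)
  finally show ?case by simp
qed

lemma field_inter_rfields: "rty r \<Longrightarrow> r =\<^sub>T field_inter (rfields r)"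
proof (induction r)
  case REmpty
  then show ?case by (simp add: ty_eq_refl wf_ty_rty.intros)
next
  case (RField l s)
  then have "wf_ty s" "wf_ty (RField l s)" by (auto elim: rty_RFieldE intro: wf_ty_rty.intros)
  then show ?case unfolding ty_eq_def
    by (auto intro!: sub.interI sub.refl sub.field_empty sub.inter1 wf_ty_rty.intros)
next
  case (Inter r1 r2)
  then have "rty r1" "rty r2" by (auto elim: rty_InterE)
  with Inter.IH show ?case
    by (auto intro: ty_eq_trans[OF ty_eq_Inter Inter_field_inter] wf_fields_rfields)
next
  case (RPlus r1 r2)
  then have r: "rty r1" "rty r2" by (auto elim: rty_RPlusE)
  let ?n1 = "field_inter (rfields r1)" and ?n2 = "field_inter (rfields r2)"
  have n: "rty ?n1" "rty ?n2" using r by (auto intro: rty_field_inter wf_fields_rfields)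
  have "RPlus r1 r2 =\<^sub>T RPlus ?n1 r2"
    using RPlus.IH(1) r n unfolding ty_eq_def by (auto intro: sub.plus_mono_l)
  also have "\<dots> =\<^sub>T RPlus ?n1 ?n2"
    using RPlus.IH(2) r n unfolding ty_eq_def by (auto intro: sub.plus_cong_r)
  also have "\<dots> =\<^sub>T field_inter (rfields (RPlus r1 r2))"
    using r by (auto intro: RPlus_field_inter wf_fields_rfields)
  finally show ?case .
qed (auto elim: rty_OmegaE rty_ArrE rty_TAtomE)

lemma has_type_Rec_field_inter:
  "(\<And>l s. (l, s) \<in> set xs \<Longrightarrow> \<exists>M. h l = Some M \<and> \<Gamma> \<turnstile> M : s) \<Longrightarrow> \<Gamma> \<turnstile> Rec h : field_inter xs"
proof (induction xs rule: field_inter.induct)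
  case (2 l s xs)
  then obtain M where "h l = Some M" "\<Gamma> \<turnstile> M : s" by fastforce
  with 2 show ?case by (auto intro: has_type.inter has_type.rec_field)
qed (simp add: has_type.rec_empty)

lemma fields_typed_rfields:
  "fields_typed \<Gamma> L h r \<Longrightarrow> (l, s) \<in> set (rfields r) \<Longrightarrow> l \<notin> L \<Longrightarrow>
    \<exists>M. h l = Some M \<and> \<Gamma> \<turnstile> M : s"
proof (induction r arbitrary: L)
  case (RPlus r1 r2)
  then show ?case by (auto simp: override_def tlbl_eq_rfields)
qed auto

lemma has_type_Rec_map_add:
  assumes "\<Gamma> \<turnstile> Rec f : r1" "rty r1" "\<Gamma> \<turnstile> Rec g : r2" "rty r2" "dom g = tlbl r2"
  shows "\<Gamma> \<turnstile> Rec (f ++ g) : RPlus r1 r2"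
proof -
  have f: "fields_typed \<Gamma> {} f r1" and g: "fields_typed \<Gamma> {} g r2"
    using assms(1,3) has_type_Rec_fields_typed by blast+
  have "\<exists>M. (f ++ g) l = Some M \<and> \<Gamma> \<turnstile> M : s" if "(l, s) \<in> set (rfields (RPlus r1 r2))" for l s
  proof (cases "l \<in> dom g")
    case True
    with that assms(5) have "(l, s) \<in> set (rfields r2)"
      by (auto simp: override_def tlbl_eq_rfields)
    with True show ?thesis using fields_typed_rfields[OF g] by (simp add: map_add_dom_app_simps)
  next
    case False
    with that assms(5) have "(l, s) \<in> set (rfields r1)"
      by (force simp: override_def tlbl_eq_rfields)
    with False show ?thesis using fields_typed_rfields[OF f] by (simp add: map_add_dom_app_simps)
  qed
  then have "\<Gamma> \<turnstile> Rec (f ++ g) : field_inter (rfields (RPlus r1 r2))"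
    by (rule has_type_Rec_field_inter)
  moreover have "rty (RPlus r1 r2)"
    using assms(2,4) by (rule wf_ty_rty.intros)
  ultimately show ?thesis
    using field_inter_rfields unfolding ty_eq_def by (meson has_type.subsump)
qed

inductive_cases red_VarE: "Var x \<rightarrow>\<^sub>R N"
inductive_cases red_LamE: "Lam M \<rightarrow>\<^sub>R N"
inductive_cases red_AppE: "App M P \<rightarrow>\<^sub>R N"
inductive_cases red_SelE: "Sel M l \<rightarrow>\<^sub>R N"
inductive_cases red_RecE: "Rec f \<rightarrow>\<^sub>R N"
inductive_cases red_MergeE: "Merge M g \<rightarrow>\<^sub>R N"

lemma subject_reduction: "\<Gamma> \<turnstile> M : \<sigma> \<Longrightarrow> M \<rightarrow>\<^sub>R N \<Longrightarrow> \<Gamma> \<turnstile> N : \<sigma>"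
proof (induction arbitrary: N rule: has_type.induct)
  case (lam s \<Gamma> M t)
  from lam.prems show ?case
    by (rule red_LamE) (use lam in \<open>auto intro: has_type.lam\<close>)
next
  case (app \<Gamma> M s t P)
  from app.prems show ?case
  proof (rule red_AppE)
    fix Q
    assume "M = Lam Q" "N = subst Q 0 P"
    then show ?thesis
      using app.hyps has_type_Lam_Arr_inv has_type_beta by blast
  qed (use app in \<open>auto intro: has_type.app\<close>)
next
  case (rec_field f k Mk \<Gamma> s)
  from rec_field.prems obtain l M M' where
    "N = Rec (f(l \<mapsto> M'))" "f l = Some M" "M \<rightarrow>\<^sub>R M'"
    by (auto elim: red_RecE)
  with rec_field show ?case
    by (cases "l = k") (auto intro: has_type.rec_field)
next
  case (sel \<Gamma> M l s)
  from sel.prems show ?case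
  proof (rule red_SelE)
    fix f
    assume "M = Rec f" "f l = Some N"
    then have "fields_typed \<Gamma> {} f (RField l s)"
      using sel.hyps has_type_Rec_fields_typed by blast
    with \<open>f l = Some N\<close> show ?thesis by auto
  qed (use sel.IH in \<open>auto intro: has_type.sel\<close>)
next
  case (merge \<Gamma> M r1 g r2)
  from merge.prems show ?case
  proof (rule red_MergeE)
    fix f
    assume "M = Rec f" "N = Rec (f ++ g)"
    then show ?thesis using merge.hyps has_type_Rec_map_add by auto
  next
    fix l P P'
    assume N: "N = Merge M (g(l \<mapsto> P'))" and "g l = Some P" "P \<rightarrow>\<^sub>R P'"
    then have typed: "\<Gamma> \<turnstile> Rec (g(l \<mapsto> P')) : r2"
      using merge.IH(2) by (auto intro: red.recC)
    have "dom (g(l \<mapsto> P')) = tlbl r2"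
      using \<open>g l = Some P\<close> merge.hyps(5) by auto
    with merge.hyps(1,2) typed merge.hyps(4) show ?thesis
      unfolding N by (rule has_type.merge)
  qed (use merge in \<open>auto intro: has_type.merge\<close>)
qed (auto elim: red_VarE red_RecE intro: has_type.intros)

theorem theorem3p16:
  fixes \<Gamma> :: "nat \<Rightarrow> ty option" and M N :: trm and \<sigma> :: ty
  assumes "basis \<Gamma>" and "wf_trm M" and "wf_trm N" and "wf_ty \<sigma>"
    and "\<Gamma> \<turnstile> M : \<sigma>" and "M \<rightarrow>\<^sub>R N"
  shows "\<Gamma> \<turnstile> N : \<sigma>"
  using assms(5,6) by (rule subject_reduction)

end
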